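(* If $d$ and $e$ are degree sequences with the same sum such that $d\succeq e$, then $\Delta_{m(d)}(d)\le \Delta_{m(e)}(e)$.
   Context: Degree sequences (of finite simple graphs, terms may be $0$) are listed in nonincreasing order; sequences of different lengths are compared after padding with zeros. $m(d)=\max\{i : d_i\ge i-1\}$. For integers $k\ge 0$, $\Delta_k(d)=k(k-1)+\sum_{i>k}\min\{k,d_i\}-\sum_{i\le k}d_i$. Majorization (dominance order): for degree sequences $d,e$ with the same sum, $d\succeq e$ means $\sum_{i\le k}d_i\ge\sum_{i\le k}e_i$ for all $k$. *)

theory Defs
  imports Main
begin

text \<open>A finite sequence of naturals is represented as a list; the paper's 1-based
  term d_i is dterm d i, which is 0 for indices beyond the length (padding with zeros).\<close>

definition dterm :: "nat list \<Rightarrow> nat \<Rightarrow> nat" where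
  "dterm d i = (if 1 \<le> i \<and> i \<le> length d then d ! (i - 1) else 0)"

definition is_degree_seq :: "nat list \<Rightarrow> bool" where
  "is_degree_seq d \<longleftrightarrow> sorted_wrt (\<ge>) d \<and>
     (\<exists>E :: nat \<Rightarrow> nat \<Rightarrow> bool.
        (\<forall>i j. E i j \<longrightarrow> E j i) \<and> (\<forall>i. \<not> E i i) \<and>
        (\<forall>i < length d. d ! i = card {j. j < length d \<and> E i j}))"

definition m_index :: "nat list \<Rightarrow> nat" where
  "m_index d = Max {i. 1 \<le> i \<and> i - 1 \<le> dterm d i}"

definition Delta :: "nat \<Rightarrow> nat list \<Rightarrow> int" where
  "Delta k d = int (k * (k - 1)) + (\<Sum>i = k + 1..length d. int (min k (dterm d i)))
               - (\<Sum>i = 1..k. int (dterm d i))"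

definition majorizes :: "nat list \<Rightarrow> nat list \<Rightarrow> bool" where
  "majorizes d e \<longleftrightarrow> (\<forall>k. (\<Sum>i = 1..k. dterm e i) \<le> (\<Sum>i = 1..k. dterm d i))"

end

theory Submission
  imports Defs
begin

text \<open>Replacing each min k d_i by d_i in Delta gives
  h_k(d) = k(k-1) + \<Sum>d - 2 \<Sum>_{i\<le>k} d_i, an upper bound for Delta_k(d). For a nonincreasing
  sequence and k = m(d) all terms beyond m are already below m, so Delta_m(d) = h_m(d);
  moreover h_{k+1}(d) - h_k(d) = 2(k - d_{k+1}) changes sign exactly at m(d), so h(d) is minimal
  at m(d). Majorization with equal sums says h_k(d) \<le> h_k(e) for every k, whence
  Delta_{m(d)}(d) = h_{m(d)}(d) \<le> h_{m(e)}(d) \<le> h_{m(e)}(e) = Delta_{m(e)}(e).\<close>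

lemma dterm_antimono:
  assumes "sorted_wrt (\<ge>) d" "1 \<le> i" "i \<le> j"
  shows "dterm d j \<le> dterm d i"
proof (cases "j \<le> length d")
  case True
  then have "d ! (j - 1) \<le> d ! (i - 1)"
    using assms by (cases "i = j") (auto simp: sorted_wrt_iff_nth_less)
  then show ?thesis using True assms by (simp add: dterm_def)
qed (simp add: dterm_def)

lemma sum_dterm_eq_sum_nth: "(\<Sum>i = 1..n. dterm d i) = (\<Sum>i<min n (length d). d ! i)"
proof (induction n)
  case (Suc n)
  have "(\<Sum>i<min (Suc n) (length d). d ! i) = (\<Sum>i<min n (length d). d ! i)
      + (if Suc n \<le> length d then d ! n else 0)"
    by (cases "Suc n \<le> length d"; cases "n = length d") (auto simp: min_def)
  then show ?case using Suc by (simp add: dterm_def)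
qed simp

lemma sum_list_eq_sum_dterm: "sum_list d = (\<Sum>i = 1..length d. dterm d i)"
  using sum_dterm_eq_sum_nth[of d "length d"] by (simp add: sum_list_sum_nth lessThan_atLeast0)

lemma sum_list_split_dterm:
  "sum_list d = (\<Sum>i = 1..n. dterm d i) + (\<Sum>i = n + 1..length d. dterm d i)"
proof (cases "n \<le> length d")
  case True
  have "(\<Sum>i = 1..n + (length d - n). dterm d i)
      = (\<Sum>i = 1..n. dterm d i) + (\<Sum>i = n + 1..n + (length d - n). dterm d i)"
    by (rule sum.ub_add_nat) simp
  then show ?thesis using True sum_list_eq_sum_dterm[of d] by simp
next
  case False
  then show ?thesis
    using sum_dterm_eq_sum_nth[of d n] by (simp add: sum_list_sum_nth lessThan_atLeast0 min_def)
qed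

lemma finite_m_index_set: "finite {i. 1 \<le> i \<and> i - 1 \<le> dterm d i}"
proof (rule finite_subset)
  show "{i. 1 \<le> i \<and> i - 1 \<le> dterm d i} \<subseteq> {0..length d + 1}"
    by (auto simp: dterm_def split: if_splits)
qed simp

lemma m_index_le_Suc_dterm: "m_index d - 1 \<le> dterm d (m_index d)"
proof -
  have "1 \<in> {i. 1 \<le> i \<and> i - 1 \<le> dterm d i}" by simp
  then show ?thesis
    using Max_in[OF finite_m_index_set] unfolding m_index_def by blast
qed

lemma dterm_Suc_m_index_less: "dterm d (m_index d + 1) < m_index d"
proof (rule ccontr)
  assume "\<not> ?thesis"
  then have "m_index d + 1 \<le> m_index d"
    unfolding m_index_def by (intro Max_ge[OF finite_m_index_set]) simp
  then show False by simp
qed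

definition Delta_relax :: "nat \<Rightarrow> nat list \<Rightarrow> int" where
  "Delta_relax k d = int (k * (k - 1)) + int (sum_list d) - 2 * int (\<Sum>i = 1..k. dterm d i)"

lemma Delta_relax_Suc:
  "Delta_relax (Suc k) d = Delta_relax k d + 2 * int k - 2 * int (dterm d (Suc k))"
proof -
  have "int (Suc k * (Suc k - 1)) = int (k * (k - 1)) + 2 * int k"
    by (cases k) (auto simp: algebra_simps)
  then show ?thesis by (simp add: Delta_relax_def algebra_simps)
qed

lemma Delta_m_index_eq_relax:
  assumes "sorted_wrt (\<ge>) d"
  shows "Delta (m_index d) d = Delta_relax (m_index d) d"
proof -
  let ?m = "m_index d"
  have "min ?m (dterm d i) = dterm d i" if "i \<in> {?m + 1..length d}" for i
    using that dterm_antimono[OF assms, of "?m + 1" i] dterm_Suc_m_index_less[of d] by simp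
  then have "(\<Sum>i = ?m + 1..length d. int (min ?m (dterm d i)))
      = int (\<Sum>i = ?m + 1..length d. dterm d i)"
    by simp
  then show ?thesis
    using sum_list_split_dterm[of d ?m] unfolding Delta_def Delta_relax_def by simp
qed

lemma Delta_relax_m_index_le:
  assumes "sorted_wrt (\<ge>) d"
  shows "Delta_relax (m_index d) d \<le> Delta_relax k d"
proof (cases "m_index d \<le> k")
  case True
  then show ?thesis
  proof (induction k rule: dec_induct)
    case (step k)
    have "dterm d (Suc k) \<le> dterm d (m_index d + 1)"
      using dterm_antimono[OF assms, of "m_index d + 1" "Suc k"] step by simp
    then have "dterm d (Suc k) \<le> k" using dterm_Suc_m_index_less[of d] step by simp
    then show ?case using step Delta_relax_Suc[of k d] by simp
  qed simp
next
  case False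
  then have "k \<le> m_index d" by simp
  then show ?thesis
  proof (induction k rule: inc_induct)
    case (step k)
    have "dterm d (m_index d) \<le> dterm d (Suc k)"
      using dterm_antimono[OF assms, of "Suc k" "m_index d"] step by simp
    then have "k \<le> dterm d (Suc k)" using m_index_le_Suc_dterm[of d] step by simp
    then show ?case using step Delta_relax_Suc[of k d] by simp
  qed simp
qed

lemma Delta_relax_le_if_majorizes:
  assumes "sum_list d = sum_list e" "majorizes d e"
  shows "Delta_relax k d \<le> Delta_relax k e"
proof -
  have "int (\<Sum>i = 1..k. dterm e i) \<le> int (\<Sum>i = 1..k. dterm d i)"
    using assms(2) unfolding majorizes_def by (simp only: of_nat_le_iff)
  then show ?thesis using assms(1) unfolding Delta_relax_def by linarith
qed

theorem lemma15:
  assumes "is_degree_seq d" and "is_degree_seq e"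
    and "sum_list d = sum_list e"
    and "majorizes d e"
  shows "Delta (m_index d) d \<le> Delta (m_index e) e"
proof -
  have sd: "sorted_wrt (\<ge>) d" and se: "sorted_wrt (\<ge>) e"
    using assms(1,2) by (auto simp: is_degree_seq_def)
  have "Delta (m_index d) d = Delta_relax (m_index d) d"
    using Delta_m_index_eq_relax[OF sd] .
  also have "\<dots> \<le> Delta_relax (m_index e) d"
    using Delta_relax_m_index_le[OF sd] .
  also have "\<dots> \<le> Delta_relax (m_index e) e"
    using Delta_relax_le_if_majorizes[OF assms(3,4)] .
  also have "\<dots> = Delta (m_index e) e"
    using Delta_m_index_eq_relax[OF se] by simp
  finally show ?thesis .
qed

end
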